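(* Let $p(1),\dots,p(K)\in[0,1]$, let $\mathbb F_i$ be the CDF of $\mathrm{Bern}(p(i))$, and for $\alpha\in\Delta^{K-1}$ write $\mathbb F_\alpha=\sum_i\alpha(i)\mathbb F_i$. Let $h(u)=\sqrt u-u$. Then: (1) for all $\alpha,\beta\in\Delta^{K-1}$, $U_h(\mathbb F_\alpha)-U_h(\mathbb F_\beta)\le\|\mathbb F_\alpha-\mathbb F_\beta\|_{\mathrm W}^{1/2}$; (2) let $\alpha^\star\in\arg\max_{\alpha\in\Delta^{K-1}}U_h(\mathbb F_\alpha)$ and $\mathbb F^\star=\mathbb F_{\alpha^\star}$. If $\max_i p(i)>\tfrac14$ and $\min_i p(i)<\tfrac14$, then $U_h(\mathbb F^\star)-U_h(\mathbb F_\alpha)\le\|\mathbb F^\star-\mathbb F_\alpha\|_{\mathrm W}$ for all $\alpha\in\Delta^{K-1}$; in all cases, $U_h(\mathbb F^\star)-U_h(\mathbb F_\alpha)\le\|\mathbb F^\star-\mathbb F_\alpha\|_{\mathrm W}^{1/2}$ for all $\alpha$.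
   Context: For a CDF $Q$ of a nonnegative random variable, $U_h(Q)=\int_0^\infty h(1-Q(x))\,dx$. $\|G-S\|_{\mathrm W}=\int|G(x)-S(x)|dx$ is the 1-Wasserstein distance. $\Delta^{K-1}$ is the probability simplex in $\mathbb R^K$. *)

theory Defs
  imports "HOL-Analysis.Analysis"
begin

definition bern_cdf :: "real \<Rightarrow> real \<Rightarrow> real" where
  "bern_cdf p x = (if x < 0 then 0 else if x < 1 then 1 - p else 1)"

definition prob_simplex :: "nat \<Rightarrow> (nat \<Rightarrow> real) set" where
  "prob_simplex K = {\<alpha>. (\<forall>i<K. 0 \<le> \<alpha> i) \<and> (\<Sum>i<K. \<alpha> i) = 1}"

definition mix_cdf :: "nat \<Rightarrow> (nat \<Rightarrow> real) \<Rightarrow> (nat \<Rightarrow> real) \<Rightarrow> real \<Rightarrow> real" where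
  "mix_cdf K p \<alpha> x = (\<Sum>i<K. \<alpha> i * bern_cdf (p i) x)"

definition hfun :: "real \<Rightarrow> real" where
  "hfun u = sqrt u - u"

definition U_h :: "(real \<Rightarrow> real) \<Rightarrow> (real \<Rightarrow> real) \<Rightarrow> real" where
  "U_h h Q = integral {0..} (\<lambda>x. h (1 - Q x))"

definition wass :: "(real \<Rightarrow> real) \<Rightarrow> (real \<Rightarrow> real) \<Rightarrow> real" where
  "wass G S = integral UNIV (\<lambda>x. \<bar>G x - S x\<bar>)"

end

theory Submission
  imports Defs
begin

text \<open>A mixture of Bernoulli laws is the Bernoulli law of the mixed mean
  \<open>q(\<alpha>) = \<Sum>\<^sub>i \<alpha>(i) p(i)\<close>, so \<open>U\<^sub>h(\<bbbF>\<^sub>\<alpha>) = h(q(\<alpha>))\<close> and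
  \<open>\<parallel>\<bbbF>\<^sub>\<alpha> - \<bbbF>\<^sub>\<beta>\<parallel>\<^sub>W = \<bar>q(\<alpha>) - q(\<beta>)\<bar>\<close>, and everything reduces to
  \<open>h(u) = \<surd>u - u\<close> on \<open>[0,1]\<close>.  Subadditivity of the square root gives
  \<open>h(a) - h(b) \<le> \<surd>\<bar>a - b\<bar>\<close>.  Moreover \<open>1/4 - h(q) = (\<surd>q - 1/2)\<^sup>2\<close>, so \<open>h\<close>
  is maximal exactly at \<open>q = 1/4\<close>; when \<open>min p < 1/4 < max p\<close> this mean is
  attained by a mixture, an optimal mixture has mean \<open>1/4\<close>, and
  \<open>(\<surd>q - 1/2)\<^sup>2 \<le> \<bar>\<surd>q - 1/2\<bar> (\<surd>q + 1/2) = \<bar>q - 1/4\<bar>\<close>.\<close>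

lemma integral_step_function:
  fixes a b c :: real
  assumes "a \<le> b" and "{a..b} \<subseteq> T"
    and "\<And>x. x \<in> T \<Longrightarrow> f x = (if a \<le> x \<and> x < b then c else 0)"
  shows "integral T f = c * (b - a)"
proof -
  have "((\<lambda>x. c) has_integral c * (b - a)) {a..b}"
    using has_integral_const_real[of c a b] assms(1) by (simp add: mult.commute)
  then have "((\<lambda>x. if x \<in> {a..b} then c else 0) has_integral c * (b - a)) T"
    by (rule has_integral_restrict[OF assms(2), THEN iffD2])
  then have "(f has_integral c * (b - a)) T"
    by (rule has_integral_spike[OF negligible_sing[of b], rotated]) (auto simp: assms(3))
  then show ?thesis
    by blast
qed

lemma U_h_bern_cdf:
  assumes "h 0 = 0"
  shows "U_h h (bern_cdf q) = h q"
  unfolding U_h_def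
  by (subst integral_step_function[of 0 1 _ _ "h q", simplified])
     (auto simp: bern_cdf_def assms)

lemma wass_bern_cdf: "wass (bern_cdf a) (bern_cdf b) = \<bar>a - b\<bar>"
  unfolding wass_def
  by (subst integral_step_function[of 0 1 _ _ "\<bar>a - b\<bar>", simplified])
     (auto simp: bern_cdf_def)

definition mix_mean :: "nat \<Rightarrow> (nat \<Rightarrow> real) \<Rightarrow> (nat \<Rightarrow> real) \<Rightarrow> real" where
  "mix_mean K p \<alpha> = (\<Sum>i<K. \<alpha> i * p i)"

lemma mix_cdf_eq_bern_cdf:
  assumes "\<alpha> \<in> prob_simplex K"
  shows "mix_cdf K p \<alpha> = bern_cdf (mix_mean K p \<alpha>)"
proof
  fix x
  have "(\<Sum>i<K. \<alpha> i) = 1"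
    using assms by (simp add: prob_simplex_def)
  then show "mix_cdf K p \<alpha> x = bern_cdf (mix_mean K p \<alpha>) x"
    unfolding mix_cdf_def bern_cdf_def mix_mean_def
    by (auto simp: algebra_simps sum_subtractf sum_distrib_left[symmetric])
qed

lemma U_h_mix_cdf:
  assumes "h 0 = 0" and "\<alpha> \<in> prob_simplex K"
  shows "U_h h (mix_cdf K p \<alpha>) = h (mix_mean K p \<alpha>)"
  by (simp add: mix_cdf_eq_bern_cdf[OF assms(2)] U_h_bern_cdf assms(1))

lemma wass_mix_cdf:
  assumes "\<alpha> \<in> prob_simplex K" and "\<beta> \<in> prob_simplex K"
  shows "wass (mix_cdf K p \<alpha>) (mix_cdf K p \<beta>) = \<bar>mix_mean K p \<alpha> - mix_mean K p \<beta>\<bar>"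
  by (simp add: mix_cdf_eq_bern_cdf[OF assms(1)] mix_cdf_eq_bern_cdf[OF assms(2)] wass_bern_cdf)

lemma mix_mean_bounds:
  assumes "\<alpha> \<in> prob_simplex K" and "\<And>i. i < K \<Longrightarrow> l \<le> p i \<and> p i \<le> u"
  shows "l \<le> mix_mean K p \<alpha> \<and> mix_mean K p \<alpha> \<le> u"
proof -
  have nonneg: "\<And>i. i < K \<Longrightarrow> 0 \<le> \<alpha> i" and total: "(\<Sum>i<K. \<alpha> i) = 1"
    using assms(1) by (auto simp: prob_simplex_def)
  have "(\<Sum>i<K. \<alpha> i * l) \<le> mix_mean K p \<alpha>" "mix_mean K p \<alpha> \<le> (\<Sum>i<K. \<alpha> i * u)"
    unfolding mix_mean_def using nonneg assms(2)
    by (auto intro!: sum_mono mult_left_mono)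
  then show ?thesis
    by (simp add: sum_distrib_right[symmetric] total)
qed

lemma mix_mean_attains:
  assumes "i < K" "j < K" "p j \<le> v" "v \<le> p i"
  shows "\<exists>\<alpha>\<in>prob_simplex K. mix_mean K p \<alpha> = v"
proof -
  \<comment> \<open>if \<open>p i = p j\<close> then \<open>t = 0\<close>, since \<open>x / 0 = 0\<close>\<close>
  define t where "t = (v - p j) / (p i - p j)"
  have t: "0 \<le> t \<and> t \<le> 1 \<and> t * p i + (1 - t) * p j = v"
  proof (cases "p i = p j")
    case True
    then show ?thesis
      using assms(3,4) by (simp add: t_def)
  next
    case False
    then have gap: "0 < p i - p j"
      using assms(3,4) by linarith
    then have "t * (p i - p j) = v - p j"
      by (simp add: t_def)
    moreover have "0 \<le> t" "t \<le> 1"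
      using gap assms(3,4) by (simp_all add: t_def divide_le_eq_1)
    ultimately show ?thesis
      by (simp add: algebra_simps)
  qed
  define \<alpha> where "\<alpha> = (\<lambda>k. t * (if k = i then 1 else 0) + (1 - t) * (if k = j then 1 else 0))"
  have "(\<Sum>k<K. \<alpha> k) = t + (1 - t)"
    unfolding \<alpha>_def using assms(1,2) by (simp add: sum.distrib flip: sum_distrib_left)
  then have "\<alpha> \<in> prob_simplex K"
    using t by (simp add: prob_simplex_def \<alpha>_def)
  moreover have "mix_mean K p \<alpha> = t * p i + (1 - t) * p j"
  proof -
    have "\<And>k. \<alpha> k * p k = t * (if k = i then p k else 0) + (1 - t) * (if k = j then p k else 0)"
      unfolding \<alpha>_def by (simp add: algebra_simps)
    then show ?thesis
      unfolding mix_mean_def using assms(1,2) by (simp add: sum.distrib flip: sum_distrib_left)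
  qed
  ultimately show ?thesis
    using t by auto
qed

lemma hfun_diff_le_sqrt:
  assumes "0 \<le> a" "0 \<le> b" "b \<le> 1"
  shows "hfun a - hfun b \<le> sqrt \<bar>a - b\<bar>"
proof (cases "b \<le> a")
  case True
  have "sqrt a \<le> sqrt (a - b) + sqrt b"
    using sqrt_add_le_add_sqrt[of "a - b" b] True assms by simp
  then show ?thesis
    using True by (simp add: hfun_def)
next
  case False
  have "b - a \<le> sqrt (b - a)"
    using False assms by (intro real_le_rsqrt) (simp add: power2_eq_square mult_left_le)
  moreover have "sqrt a \<le> sqrt b"
    using False by simp
  moreover have dist: "\<bar>a - b\<bar> = b - a"
    using False by simp
  ultimately show ?thesis
    unfolding hfun_def dist by linarith
qed

lemma hfun_zero: "hfun 0 = 0"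
  by (simp add: hfun_def)

lemma quarter_minus_hfun: "0 \<le> q \<Longrightarrow> 1/4 - hfun q = (sqrt q - 1/2)\<^sup>2"
  by (simp add: hfun_def power2_eq_square algebra_simps)

lemma hfun_quarter: "hfun (1/4) = 1/4"
  by (simp add: hfun_def real_sqrt_divide)

lemma hfun_ge_quarter_imp_eq:
  assumes "0 \<le> q" "1/4 \<le> hfun q"
  shows "q = 1/4"
proof -
  have "(sqrt q - 1/2)\<^sup>2 \<le> 0"
    using quarter_minus_hfun[OF assms(1)] assms(2) by linarith
  then have "sqrt q = 1/2"
    by simp
  then have "q = (1/2)\<^sup>2"
    using real_sqrt_pow2[OF assms(1)] by metis
  then show ?thesis
    by (simp add: power2_eq_square)
qed

lemma quarter_minus_hfun_le:
  assumes "0 \<le> q"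
  shows "1/4 - hfun q \<le> \<bar>q - 1/4\<bar>"
proof -
  have "1/4 - hfun q = \<bar>sqrt q - 1/2\<bar> * \<bar>sqrt q - 1/2\<bar>"
    using quarter_minus_hfun[OF assms] by (simp add: power2_eq_square)
  also have "\<dots> \<le> \<bar>sqrt q - 1/2\<bar> * \<bar>sqrt q + 1/2\<bar>"
    using real_sqrt_ge_zero[OF assms] by (intro mult_left_mono) linarith+
  also have "\<dots> = \<bar>(sqrt q - 1/2) * (sqrt q + 1/2)\<bar>"
    by (rule abs_mult[symmetric])
  also have "(sqrt q - 1/2) * (sqrt q + 1/2) = q - 1/4"
    using assms by (simp add: algebra_simps)
  finally show ?thesis .
qed

lemma optimal_mix_mean_eq_quarter:
  assumes "\<alpha>\<^sub>0 \<in> prob_simplex K" "0 \<le> mix_mean K p \<alpha>\<^sub>0"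
    and optimal: "\<forall>\<alpha>\<in>prob_simplex K. hfun (mix_mean K p \<alpha>) \<le> hfun (mix_mean K p \<alpha>\<^sub>0)"
    and "Min (p ` {..<K}) \<le> 1/4" "1/4 \<le> Max (p ` {..<K})"
  shows "mix_mean K p \<alpha>\<^sub>0 = 1/4"
proof -
  have "K \<noteq> 0"
    using assms(1) by (intro notI) (simp add: prob_simplex_def)
  then have nonempty: "p ` {..<K} \<noteq> {}"
    by (simp add: lessThan_empty_iff)
  obtain i where i: "i < K" "p i = Max (p ` {..<K})"
    using Max_in[OF finite_imageI[OF finite_lessThan] nonempty] by (metis imageE lessThan_iff)
  obtain j where j: "j < K" "p j = Min (p ` {..<K})"
    using Min_in[OF finite_imageI[OF finite_lessThan] nonempty] by (metis imageE lessThan_iff)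
  obtain \<beta> where "\<beta> \<in> prob_simplex K" "mix_mean K p \<beta> = 1/4"
    using mix_mean_attains[OF i(1) j(1)] i(2) j(2) assms(4,5) by metis
  then have "1/4 \<le> hfun (mix_mean K p \<alpha>\<^sub>0)"
    using optimal hfun_quarter by metis
  then show ?thesis
    using hfun_ge_quarter_imp_eq assms(2) by blast
qed

theorem mainTheorem6:
  fixes K :: nat and p :: "nat \<Rightarrow> real"
  assumes "\<And>i. i < K \<Longrightarrow> 0 \<le> p i \<and> p i \<le> 1"
  shows "(\<forall>\<alpha>\<in>prob_simplex K. \<forall>\<beta>\<in>prob_simplex K.
            U_h hfun (mix_cdf K p \<alpha>) - U_h hfun (mix_cdf K p \<beta>)
              \<le> sqrt (wass (mix_cdf K p \<alpha>) (mix_cdf K p \<beta>)))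
       \<and> (\<forall>\<alpha>s. \<alpha>s \<in> prob_simplex K \<and>
              (\<forall>\<alpha>\<in>prob_simplex K. U_h hfun (mix_cdf K p \<alpha>) \<le> U_h hfun (mix_cdf K p \<alpha>s)) \<longrightarrow>
            ((Max (p ` {..<K}) > 1/4 \<and> Min (p ` {..<K}) < 1/4 \<longrightarrow>
               (\<forall>\<alpha>\<in>prob_simplex K. U_h hfun (mix_cdf K p \<alpha>s) - U_h hfun (mix_cdf K p \<alpha>)
                  \<le> wass (mix_cdf K p \<alpha>s) (mix_cdf K p \<alpha>)))
             \<and> (\<forall>\<alpha>\<in>prob_simplex K. U_h hfun (mix_cdf K p \<alpha>s) - U_h hfun (mix_cdf K p \<alpha>)
                  \<le> sqrt (wass (mix_cdf K p \<alpha>s) (mix_cdf K p \<alpha>)))))"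
proof -
  have unit: "0 \<le> mix_mean K p \<alpha> \<and> mix_mean K p \<alpha> \<le> 1" if "\<alpha> \<in> prob_simplex K" for \<alpha>
    using mix_mean_bounds[OF that, where l = 0 and u = 1] assms by blast
  have sqrt_bound: "U_h hfun (mix_cdf K p \<alpha>) - U_h hfun (mix_cdf K p \<beta>)
      \<le> sqrt (wass (mix_cdf K p \<alpha>) (mix_cdf K p \<beta>))"
    if "\<alpha> \<in> prob_simplex K" "\<beta> \<in> prob_simplex K" for \<alpha> \<beta>
    using hfun_diff_le_sqrt unit[OF that(1)] unit[OF that(2)]
    by (simp add: U_h_mix_cdf[of hfun, OF hfun_zero] that wass_mix_cdf)
  have lipschitz_bound: "U_h hfun (mix_cdf K p \<alpha>\<^sub>0) - U_h hfun (mix_cdf K p \<alpha>)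
      \<le> wass (mix_cdf K p \<alpha>\<^sub>0) (mix_cdf K p \<alpha>)"
    if \<alpha>\<^sub>0: "\<alpha>\<^sub>0 \<in> prob_simplex K"
      and "\<forall>\<alpha>\<in>prob_simplex K. U_h hfun (mix_cdf K p \<alpha>) \<le> U_h hfun (mix_cdf K p \<alpha>\<^sub>0)"
      and "Max (p ` {..<K}) > 1/4 \<and> Min (p ` {..<K}) < 1/4"
      and \<alpha>: "\<alpha> \<in> prob_simplex K"
    for \<alpha>\<^sub>0 \<alpha>
  proof -
    have "\<forall>\<alpha>\<in>prob_simplex K. hfun (mix_mean K p \<alpha>) \<le> hfun (mix_mean K p \<alpha>\<^sub>0)"
      using that(2) by (simp add: U_h_mix_cdf[of hfun, OF hfun_zero] \<alpha>\<^sub>0)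
    then have quarter: "mix_mean K p \<alpha>\<^sub>0 = 1/4"
      using optimal_mix_mean_eq_quarter[OF \<alpha>\<^sub>0] unit[OF \<alpha>\<^sub>0] that(3) by auto
    show ?thesis
      unfolding U_h_mix_cdf[of hfun, OF hfun_zero \<alpha>] U_h_mix_cdf[of hfun, OF hfun_zero \<alpha>\<^sub>0]
        wass_mix_cdf[OF \<alpha>\<^sub>0 \<alpha>] quarter hfun_quarter
      using quarter_minus_hfun_le unit[OF \<alpha>] by (simp add: abs_minus_commute)
  qed
  show ?thesis
    using sqrt_bound lipschitz_bound by blast
qed

end
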